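(* Let $N=(S,E,F,I)$ be a pure 1-occurrence Petri net. For a place $s$ let $s^\bullet=\{t\in E\mid F(s,t)>0\}$ and ${}^\bullet s=\{t\in E\mid F(t,s)>0\}$; for a finite $Y\subseteq E$ let ${}^\bullet Y(s)=\sum_{t\in Y}F(s,t)$, and for $X\subseteq E$ let $X^\bullet(s)=\sum_{t\in X}F(t,s)$. For $n\in\mathbb{Z}$ let ${}^n s=\{X\subseteq{}^\bullet s\mid X^\bullet(s)\ge n\}$ and $\varphi^n_s=\bigvee_{X\in{}^n s}\bigwedge X$. Let $T(N)$ be the set of all formulae $\bigwedge Y\Rightarrow\varphi_s^{\,{}^\bullet Y(s)-I(s)}$ with $s\in S$ and $Y$ a finite subset of $s^\bullet$. Then a finite set $X\subseteq E$ is a model of $T(N)$ if and only if $X$ is a configuration of $N$.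
   Context: A Petri net $(S,E,F,I)$ has places $S$, transitions $E$ (disjoint), $F:(S\times E\cup E\times S)\to\mathbb{N}$, $I:S\to\mathbb{N}$. For a finite multiset $X$ of transitions, ${}^\bullet X(s)=\sum_t F(s,t)X(t)$, $X^\bullet(s)=\sum_t X(t)F(t,s)$, and $X$ is a configuration iff $I-{}^\bullet X+X^\bullet\ge 0$ pointwise. A 1-occurrence net is one in which every configuration is a set; a net is pure if no $s,t$ have both $F(s,t)>0$ and $F(t,s)>0$. A model of a set of infinitary propositional formulae over $E$ is a subset of $E$ (the true variables) satisfying all of them. *)

theory Defs
  imports Main "HOL-Library.Multiset" "HOL-Library.Extended_Nat"
begin

text \<open>The flow function F is split into Fst (place to transition)
and Fts (transition to place); Init is the initial marking I.  The set of
transitions E is the whole type 'e, the set of places S is the whole type 's.\<close>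

definition preM :: "('s \<Rightarrow> 'e \<Rightarrow> nat) \<Rightarrow> 'e multiset \<Rightarrow> 's \<Rightarrow> nat" where
  "preM Fst X s = (\<Sum>t\<in>set_mset X. Fst s t * count X t)"

definition postM :: "('e \<Rightarrow> 's \<Rightarrow> nat) \<Rightarrow> 'e multiset \<Rightarrow> 's \<Rightarrow> nat" where
  "postM Fts X s = (\<Sum>t\<in>set_mset X. count X t * Fts t s)"

definition configuration ::
  "('s \<Rightarrow> 'e \<Rightarrow> nat) \<Rightarrow> ('e \<Rightarrow> 's \<Rightarrow> nat) \<Rightarrow> ('s \<Rightarrow> nat) \<Rightarrow> 'e multiset \<Rightarrow> bool" where
  "configuration Fst Fts Init X \<longleftrightarrow>
     (\<forall>s. int (Init s) - int (preM Fst X s) + int (postM Fts X s) \<ge> 0)"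

definition one_occurrence ::
  "('s \<Rightarrow> 'e \<Rightarrow> nat) \<Rightarrow> ('e \<Rightarrow> 's \<Rightarrow> nat) \<Rightarrow> ('s \<Rightarrow> nat) \<Rightarrow> bool" where
  "one_occurrence Fst Fts Init \<longleftrightarrow>
     (\<forall>X. configuration Fst Fts Init X \<longrightarrow> (\<forall>t. count X t \<le> 1))"

definition pure_net :: "('s \<Rightarrow> 'e \<Rightarrow> nat) \<Rightarrow> ('e \<Rightarrow> 's \<Rightarrow> nat) \<Rightarrow> bool" where
  "pure_net Fst Fts \<longleftrightarrow> (\<forall>s t. \<not> (Fst s t > 0 \<and> Fts t s > 0))"

definition postplace :: "('s \<Rightarrow> 'e \<Rightarrow> nat) \<Rightarrow> 's \<Rightarrow> 'e set" where
  "postplace Fst s = {t. Fst s t > 0}"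

definition preplace :: "('e \<Rightarrow> 's \<Rightarrow> nat) \<Rightarrow> 's \<Rightarrow> 'e set" where
  "preplace Fts s = {t. Fts t s > 0}"

definition preS :: "('s \<Rightarrow> 'e \<Rightarrow> nat) \<Rightarrow> 'e set \<Rightarrow> 's \<Rightarrow> nat" where
  "preS Fst Y s = (\<Sum>t\<in>Y. Fst s t)"

definition postS :: "('e \<Rightarrow> 's \<Rightarrow> nat) \<Rightarrow> 'e set \<Rightarrow> 's \<Rightarrow> enat" where
  "postS Fts X s =
     (if finite {t\<in>X. Fts t s > 0} then enat (\<Sum>t\<in>{t\<in>X. Fts t s > 0}. Fts t s) else \<infinity>)"

definition enat_ge_int :: "enat \<Rightarrow> int \<Rightarrow> bool" where
  "enat_ge_int v n \<longleftrightarrow> (n \<le> 0 \<or> enat (nat n) \<le> v)"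

text \<open>Infinitary propositional formulae over variables 'e, shallowly embedded
by their satisfaction relation on models (sets of true variables).\<close>
type_synonym 'e formula = "'e set \<Rightarrow> bool"

definition BigAnd :: "'e set \<Rightarrow> 'e formula" where
  "BigAnd X = (\<lambda>M. \<forall>x\<in>X. x \<in> M)"

definition BigOr :: "'e formula set \<Rightarrow> 'e formula" where
  "BigOr \<Phi> = (\<lambda>M. \<exists>\<phi>\<in>\<Phi>. \<phi> M)"

definition Imp :: "'e formula \<Rightarrow> 'e formula \<Rightarrow> 'e formula" where
  "Imp \<phi> \<psi> = (\<lambda>M. \<phi> M \<longrightarrow> \<psi> M)"

definition is_model :: "'e set \<Rightarrow> 'e formula set \<Rightarrow> bool" where
  "is_model M T \<longleftrightarrow> (\<forall>\<phi>\<in>T. \<phi> M)"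

definition upset :: "('e \<Rightarrow> 's \<Rightarrow> nat) \<Rightarrow> int \<Rightarrow> 's \<Rightarrow> 'e set set" where
  "upset Fts n s = {X. X \<subseteq> preplace Fts s \<and> enat_ge_int (postS Fts X s) n}"

definition phi :: "('e \<Rightarrow> 's \<Rightarrow> nat) \<Rightarrow> int \<Rightarrow> 's \<Rightarrow> 'e formula" where
  "phi Fts n s = BigOr (BigAnd ` upset Fts n s)"

definition theoryT ::
  "('s \<Rightarrow> 'e \<Rightarrow> nat) \<Rightarrow> ('e \<Rightarrow> 's \<Rightarrow> nat) \<Rightarrow> ('s \<Rightarrow> nat) \<Rightarrow> 'e formula set" where
  "theoryT Fst Fts Init =
     {Imp (BigAnd Y) (phi Fts (int (preS Fst Y s) - int (Init s)) s) | s Y.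
        finite Y \<and> Y \<subseteq> postplace Fst s}"

end

theory Submission
  imports Defs
begin

text \<open>For a finite set X the formula \<open>\<phi>\<^sup>n\<^sub>s\<close> holds in X iff the whole of
  \<open>X \<inter> \<^sup>\<bullet>s\<close> already carries weight at least n, since \<open>postS\<close> is monotone. Hence
  the implications of T(N) hold in X iff \<open>\<^sup>\<bullet>Y(s) - I(s) \<le> X\<^sup>\<bullet>(s)\<close> for all finite
  \<open>Y \<subseteq> X \<inter> s\<^sup>\<bullet>\<close>, and the strongest instance \<open>Y = X \<inter> s\<^sup>\<bullet>\<close> is exactly the
  configuration condition at s.\<close>

lemma preM_mset_set: "finite X \<Longrightarrow> preM Fst (mset_set X) s = preS Fst X s"
  unfolding preM_def preS_def by (auto intro: sum.cong)

lemma postM_mset_set: "finite X \<Longrightarrow> postM Fts (mset_set X) s = (\<Sum>t\<in>X. Fts t s)"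
  unfolding postM_def by (auto intro: sum.cong)

lemma configuration_mset_set_iff:
  assumes "finite X"
  shows "configuration Fst Fts Init (mset_set X) \<longleftrightarrow>
    (\<forall>s. preS Fst X s \<le> Init s + (\<Sum>t\<in>X. Fts t s))"
proof -
  have "0 \<le> int i - int p + int q \<longleftrightarrow> p \<le> i + q" for i p q :: nat
    by linarith
  then show ?thesis
    unfolding configuration_def preM_mset_set[OF assms] postM_mset_set[OF assms]
    by (simp only:)
qed

lemma postS_finite: "finite Z \<Longrightarrow> postS Fts Z s = enat (\<Sum>t\<in>Z. Fts t s)"
  unfolding postS_def by (auto intro: sum.mono_neutral_left)

lemma enat_ge_int_enat: "enat_ge_int (enat m) n \<longleftrightarrow> n \<le> int m"
  unfolding enat_ge_int_def by auto

lemma sum_restrict_support: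
  fixes f :: "'a \<Rightarrow> nat"
  shows "finite X \<Longrightarrow> (\<Sum>t\<in>X \<inter> {t. f t > 0}. f t) = (\<Sum>t\<in>X. f t)"
  by (intro sum.mono_neutral_left) auto

lemma phi_iff:
  "phi Fts n s M \<longleftrightarrow> (\<exists>Z. Z \<subseteq> preplace Fts s \<and> Z \<subseteq> M \<and> enat_ge_int (postS Fts Z s) n)"
  unfolding phi_def BigOr_def BigAnd_def upset_def by blast

lemma phi_finite_iff:
  assumes "finite M"
  shows "phi Fts n s M \<longleftrightarrow> n \<le> int (\<Sum>t\<in>M. Fts t s)"
proof
  assume "phi Fts n s M"
  then obtain Z where "Z \<subseteq> M" and ge: "enat_ge_int (postS Fts Z s) n"
    unfolding phi_iff by blast
  from \<open>Z \<subseteq> M\<close> have "finite Z"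
    using assms finite_subset by blast
  with ge have "n \<le> int (\<Sum>t\<in>Z. Fts t s)"
    by (simp only: postS_finite enat_ge_int_enat)
  moreover from \<open>Z \<subseteq> M\<close> have "(\<Sum>t\<in>Z. Fts t s) \<le> (\<Sum>t\<in>M. Fts t s)"
    using assms by (intro sum_mono2) auto
  ultimately show "n \<le> int (\<Sum>t\<in>M. Fts t s)"
    by linarith
next
  assume "n \<le> int (\<Sum>t\<in>M. Fts t s)"
  moreover have "finite (M \<inter> preplace Fts s)"
    using assms by simp
  ultimately have "enat_ge_int (postS Fts (M \<inter> preplace Fts s) s) n"
    by (simp only: postS_finite enat_ge_int_enat preplace_def sum_restrict_support[OF assms])
  then show "phi Fts n s M"
    unfolding phi_iff by (intro exI[of _ "M \<inter> preplace Fts s"]) simp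
qed

lemma is_model_theoryT_iff:
  "is_model M (theoryT Fst Fts Init) \<longleftrightarrow>
    (\<forall>s Y. finite Y \<and> Y \<subseteq> postplace Fst s \<and> Y \<subseteq> M \<longrightarrow>
       phi Fts (int (preS Fst Y s) - int (Init s)) s M)"
  unfolding is_model_def theoryT_def Imp_def BigAnd_def subset_eq by auto

lemma is_model_theoryT_finite_iff:
  assumes "finite X"
  shows "is_model X (theoryT Fst Fts Init) \<longleftrightarrow>
    (\<forall>s. preS Fst X s \<le> Init s + (\<Sum>t\<in>X. Fts t s))"
proof -
  have int_form: "int p - int i \<le> int q \<longleftrightarrow> p \<le> i + q" for i p q :: nat
    by linarith
  have preS_mono: "preS Fst Y s \<le> preS Fst X s" if "Y \<subseteq> X" for Y s
    unfolding preS_def using assms that by (intro sum_mono2) auto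
  have preS_support: "preS Fst (X \<inter> postplace Fst s) s = preS Fst X s" for s
    unfolding preS_def postplace_def using sum_restrict_support[OF assms] .
  show ?thesis
    unfolding is_model_theoryT_iff phi_finite_iff[OF assms] int_form
  proof (intro iffI allI impI)
    fix s
    assume "\<forall>s Y. finite Y \<and> Y \<subseteq> postplace Fst s \<and> Y \<subseteq> X \<longrightarrow>
       preS Fst Y s \<le> Init s + (\<Sum>t\<in>X. Fts t s)"
    from this[rule_format, of "X \<inter> postplace Fst s" s]
    show "preS Fst X s \<le> Init s + (\<Sum>t\<in>X. Fts t s)"
      using assms preS_support by simp
  next
    fix s Y
    assume "\<forall>s. preS Fst X s \<le> Init s + (\<Sum>t\<in>X. Fts t s)"
      and "finite Y \<and> Y \<subseteq> postplace Fst s \<and> Y \<subseteq> X"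
    then show "preS Fst Y s \<le> Init s + (\<Sum>t\<in>X. Fts t s)"
      using preS_mono le_trans by blast
  qed
qed

theorem mainTheorem7:
  fixes Fst :: "'s \<Rightarrow> 'e \<Rightarrow> nat" and Fts :: "'e \<Rightarrow> 's \<Rightarrow> nat"
    and Init :: "'s \<Rightarrow> nat" and X :: "'e set"
  assumes "pure_net Fst Fts" and "one_occurrence Fst Fts Init" and "finite X"
  shows "is_model X (theoryT Fst Fts Init) \<longleftrightarrow> configuration Fst Fts Init (mset_set X)"
  unfolding is_model_theoryT_finite_iff[OF assms(3)] configuration_mset_set_iff[OF assms(3)] ..

end
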